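(* Fix the graph Laplacian $L$ (notation in the context) and the diffusion coefficient $b\neq0$. Let $\tau_0>0$ and $\alpha_\tau\in[0,1)$ with $(1+\alpha_\tau)\tau_0<\pi/(2\lambda_n)$, and for $\lambda>0$ let $f_\lambda(\tau)=\frac{\cos(\lambda\tau)}{\lambda(1-\sin(\lambda\tau))}$. Define $$\varepsilon_\tau^{\pm}=\max_{k\in\{2,\dots,n\}}\frac{\big|f_{\lambda_k}((1\pm\alpha_\tau)\tau_0)-f_{\lambda_k}(\tau_0)\big|}{f_{\lambda_k}(\tau_0)}.$$ Then for every $\tau$ with $(1-\alpha_\tau)\tau_0\le\tau\le(1+\alpha_\tau)\tau_0$, the steady-state covariances satisfy $(1-\varepsilon_\tau^-)\Sigma(\tau_0)\preceq\Sigma(\tau)\preceq(1+\varepsilon_\tau^+)\Sigma(\tau_0)$; i.e., the steady-state distribution of the observables lies in $\mathcal M_\tau=\{\mathcal N(0,\Sigma):(1-\varepsilon_\tau^-)\Sigma_0\preceq\Sigma\preceq(1+\varepsilon_\tau^+)\Sigma_0\}$ with $\Sigma_0=\Sigma(\tau_0)$.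
   Context: Network: $\mathrm d x_t=-L\,x_{t-\tau}\,\mathrm dt+b\,\mathrm d w_t$, $w_t$ standard $n$-dimensional Brownian motion, $L$ the Laplacian of a connected undirected simple graph with positive edge weights, $L=Q\Lambda Q^\top$, $Q=[q_1|\dots|q_n]$ orthogonal, $q_1=\mathbf 1_n/\sqrt n$, $\Lambda=\mathrm{diag}(0,\lambda_2,\dots,\lambda_n)$, $0<\lambda_2\le\dots\le\lambda_n$. For a delay $\tau$ with $0\le\tau<\pi/(2\lambda_n)$, the observables $y=M_nx$, $M_n=I_n-\frac1n\mathbf 1_n\mathbf 1_n^\top$, have steady-state law $\mathcal N(0,\Sigma(\tau))$ with $\Sigma(\tau)=b^2M_nQ\Psi(\tau)Q^\top M_n$, $\Psi(\tau)=\mathrm{diag}\big(0,\tfrac12 f_{\lambda_2}(\tau),\dots,\tfrac12 f_{\lambda_n}(\tau)\big)$. $A\preceq B$ means $B-A$ is positive semidefinite. *)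

theory Defs
  imports "HOL-Analysis.Analysis"
begin

text \<open>Weighted undirected simple graph on the finite vertex type 'n, given by a
  weight function w: w i j > 0 iff {i,j} is an edge (with weight w i j).\<close>
definition weighted_simple_graph :: "('n::finite \<Rightarrow> 'n \<Rightarrow> real) \<Rightarrow> bool" where
  "weighted_simple_graph w \<longleftrightarrow>
     (\<forall>i j. w i j = w j i) \<and> (\<forall>i. w i i = 0) \<and> (\<forall>i j. 0 \<le> w i j)"

definition graph_connected :: "('n::finite \<Rightarrow> 'n \<Rightarrow> real) \<Rightarrow> bool" where
  "graph_connected w \<longleftrightarrow> (\<forall>i j. (i, j) \<in> {(a, b). 0 < w a b}\<^sup>*)"

definition laplacian :: "('n::finite \<Rightarrow> 'n \<Rightarrow> real) \<Rightarrow> real^'n^'n" where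
  "laplacian w = (\<chi> i j. if i = j then (\<Sum>k\<in>UNIV. w i k) else - w i j)"

definition diag_mat :: "('n::finite \<Rightarrow> real) \<Rightarrow> real^'n^'n" where
  "diag_mat d = (\<chi> i j. if i = j then d i else 0)"

definition centering :: "real^'n::finite^'n" where
  "centering = (\<chi> i j. (if i = j then 1 else 0) - 1 / real CARD('n))"

definition f_delay :: "real \<Rightarrow> real \<Rightarrow> real" where
  "f_delay lam t = cos (lam * t) / (lam * (1 - sin (lam * t)))"

text \<open>Steady-state covariance Sigma(tau) = b^2 M Q Psi(tau) Q^T M, where i0 is the
  index of the eigenvector 1/sqrt n (eigenvalue 0).\<close>
definition Sigma :: "real \<Rightarrow> real^'n::finite^'n \<Rightarrow> ('n \<Rightarrow> real) \<Rightarrow> 'n \<Rightarrow> real \<Rightarrow> real^'n^'n" where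
  "Sigma b Q lam i0 t =
     (b^2) *\<^sub>R (centering ** Q **
        diag_mat (\<lambda>k. if k = i0 then 0 else f_delay (lam k) t / 2) ** transpose Q ** centering)"

definition psd :: "real^'n::finite^'n \<Rightarrow> bool" where
  "psd A \<longleftrightarrow> transpose A = A \<and> (\<forall>x. 0 \<le> x \<bullet> (A *v x))"

definition loewner_le :: "real^'n::finite^'n \<Rightarrow> real^'n^'n \<Rightarrow> bool" where
  "loewner_le A B \<longleftrightarrow> psd (B - A)"

end

theory Submission
  imports Defs
begin

text \<open>Writing \<open>P = centering ** Q\<close>, every covariance \<open>c *\<^sub>R Sigma b Q lam i0 t\<close> is a
  congruence \<open>P ** diag_mat d ** transpose P\<close> of a diagonal matrix, and such congruences are
  monotone in \<open>d\<close> for the Loewner order. The matrix inequalities therefore reduce to the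
  eigenvalue-wise inequalities \<open>(1 - \<epsilon>\<^sup>-) f(\<tau>\<^sub>0) \<le> f(\<tau>) \<le> (1 + \<epsilon>\<^sup>+) f(\<tau>\<^sub>0)\<close> for
  \<open>f = f_delay \<lambda>\<^sub>k\<close>. These follow from the monotonicity of \<open>f\<close> on \<open>[0, \<pi>/(2\<lambda>\<^sub>k))\<close>, visible in
  the form \<open>f(t) = (1 + sin(\<lambda>t)) / (\<lambda> cos(\<lambda>t))\<close>, applied to
  \<open>(1 - \<alpha>)\<tau>\<^sub>0 \<le> \<tau> \<le> (1 + \<alpha>)\<tau>\<^sub>0\<close>.\<close>

lemma transpose_diag_mat [simp]: "transpose (diag_mat d) = diag_mat d"
  by (simp add: transpose_def diag_mat_def vec_eq_iff)

lemma transpose_centering [simp]: "transpose (centering :: real^'n::finite^'n) = centering"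
  by (simp add: transpose_def centering_def vec_eq_iff)

lemma scaleR_diag_mat: "c *\<^sub>R diag_mat d = diag_mat (\<lambda>k. c * d k)"
  by (simp add: diag_mat_def vec_eq_iff)

lemma diff_diag_mat: "diag_mat d - diag_mat e = diag_mat (\<lambda>k. d k - e k)"
  by (simp add: diag_mat_def vec_eq_iff)

lemma inner_diag_mat: "x \<bullet> (diag_mat d *v x) = (\<Sum>k\<in>UNIV. d k * (x $ k)\<^sup>2)"
  by (simp add: inner_vec_def diag_mat_def matrix_vector_mult_def if_distrib if_distribR
      sum.delta power2_eq_square algebra_simps cong: if_cong)

lemma matrix_diff_ldistrib: "A ** (B - C) = A ** B - A ** (C :: real^'m^'n)"
  by (simp add: matrix_matrix_mult_def vec_eq_iff sum_subtractf right_diff_distrib)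

lemma matrix_diff_rdistrib: "(A - B) ** C = A ** C - B ** (C :: real^'m^'n)"
  by (simp add: matrix_matrix_mult_def vec_eq_iff sum_subtractf left_diff_distrib)

lemma psd_congruence_diag_mat:
  fixes P :: "real^'m::finite^'n::finite"
  assumes "\<forall>k. 0 \<le> d k"
  shows "psd (P ** diag_mat d ** transpose P)"
  unfolding psd_def
proof
  show "transpose (P ** diag_mat d ** transpose P) = P ** diag_mat d ** transpose P"
    by (simp add: matrix_transpose_mul matrix_mul_assoc)
  show "\<forall>x. 0 \<le> x \<bullet> ((P ** diag_mat d ** transpose P) *v x)"
  proof
    fix x :: "real^'n"
    have "x \<bullet> ((P ** diag_mat d ** transpose P) *v x) = (x v* P) \<bullet> (diag_mat d *v (x v* P))"
      by (simp flip: matrix_vector_mul_assoc add: dot_lmul_matrix)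
    also have "\<dots> \<ge> 0"
      using assms by (simp add: inner_diag_mat sum_nonneg)
    finally show "0 \<le> x \<bullet> ((P ** diag_mat d ** transpose P) *v x)" .
  qed
qed

lemma loewner_le_congruence_diag_mat:
  fixes P :: "real^'m::finite^'n::finite"
  assumes "\<forall>k. d k \<le> e k"
  shows "loewner_le (P ** diag_mat d ** transpose P) (P ** diag_mat e ** transpose P)"
proof -
  have "P ** diag_mat e ** transpose P - P ** diag_mat d ** transpose P
      = P ** diag_mat (\<lambda>k. e k - d k) ** transpose P"
    by (simp only: diff_diag_mat[symmetric] matrix_diff_ldistrib matrix_diff_rdistrib)
  then show ?thesis
    using assms psd_congruence_diag_mat[of "\<lambda>k. e k - d k" P] by (simp add: loewner_le_def)
qed

lemma scaleR_Sigma: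
  "c *\<^sub>R Sigma b Q lam i0 t = (centering ** Q)
     ** diag_mat (\<lambda>k. if k = i0 then 0 else c * b\<^sup>2 * f_delay (lam k) t / 2)
     ** transpose (centering ** Q)"
proof -
  have "c *\<^sub>R Sigma b Q lam i0 t = (centering ** Q)
     ** ((c * b\<^sup>2) *\<^sub>R diag_mat (\<lambda>k. if k = i0 then 0 else f_delay (lam k) t / 2))
     ** transpose (centering ** Q)"
    by (simp add: Sigma_def matrix_transpose_mul matrix_mul_assoc matrix_scalar_ac
        scalar_matrix_assoc)
  then show ?thesis
    by (simp add: scaleR_diag_mat if_distrib cong: if_cong)
qed

lemma loewner_le_scaleR_Sigma:
  assumes "\<forall>k. k \<noteq> i0 \<longrightarrow> c * f_delay (lam k) s \<le> c' * f_delay (lam k) t"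
  shows "loewner_le (c *\<^sub>R Sigma b Q lam i0 s) (c' *\<^sub>R Sigma b Q lam i0 t)"
  unfolding scaleR_Sigma
proof (rule loewner_le_congruence_diag_mat, intro allI)
  fix k
  have "b\<^sup>2 / 2 * (c * f_delay (lam k) s) \<le> b\<^sup>2 / 2 * (c' * f_delay (lam k) t)"
    if "k \<noteq> i0"
    using assms that by (intro mult_left_mono) auto
  then show "(if k = i0 then 0 else c * b\<^sup>2 * f_delay (lam k) s / 2)
      \<le> (if k = i0 then 0 else c' * b\<^sup>2 * f_delay (lam k) t / 2)"
    by (simp add: algebra_simps)
qed

lemma f_delay_eq:
  assumes "0 < l" "0 \<le> t" "l * t < pi / 2"
  shows "f_delay l t = (1 + sin (l * t)) / (l * cos (l * t))"
proof -
  define u where "u = l * t"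
  have u: "0 \<le> u" "u < pi / 2"
    using assms by (simp_all add: u_def)
  have "0 < cos u" "sin u < 1"
    using u sin_monotone_2pi[of u "pi / 2"] by (auto intro!: cos_gt_zero_pi)
  moreover have "cos u * cos u = (1 - sin u) * (1 + sin u)"
    using sin_cos_squared_add3[of u] by algebra
  ultimately show ?thesis
    unfolding f_delay_def u_def[symmetric] using assms(1) by (simp add: frac_eq_eq)
qed

lemma f_delay_pos:
  assumes "0 < l" "0 \<le> t" "l * t < pi / 2"
  shows "0 < f_delay l t"
proof -
  define u where "u = l * t"
  have u: "0 \<le> u" "u < pi / 2"
    using assms by (simp_all add: u_def)
  then have "0 < cos u" "0 \<le> sin u"
    by (auto intro!: cos_gt_zero_pi sin_ge_zero)
  then show ?thesis
    using assms by (simp add: f_delay_eq flip: u_def)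
qed

lemma f_delay_mono:
  assumes "0 < l" "0 \<le> t" "t \<le> t'" "l * t' < pi / 2"
  shows "f_delay l t \<le> f_delay l t'"
proof -
  define u u' where "u = l * t" and "u' = l * t'"
  have u: "0 \<le> u" "u \<le> u'" "u' < pi / 2"
    using assms by (simp_all add: u_def u'_def)
  then have "u < pi / 2"
    by linarith
  then have "f_delay l t = (1 + sin u) / (l * cos u)" "f_delay l t' = (1 + sin u') / (l * cos u')"
    using assms by (simp_all add: f_delay_eq u_def u'_def)
  moreover have "0 < cos u'" "cos u' \<le> cos u" "0 \<le> sin u" "sin u \<le> sin u'"
    using u by (auto intro!: cos_gt_zero_pi cos_monotone_0_pi_le sin_ge_zero sin_monotone_2pi_le)
  ultimately show ?thesis
    using assms(1) by (simp add: frac_le mult_left_mono)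
qed

lemma lower_bound_relative_deviation:
  fixes y y0 ym e :: real
  assumes "0 < y0" "\<bar>ym - y0\<bar> / y0 \<le> e" "ym \<le> y"
  shows "(1 - e) * y0 \<le> y"
  using assms by (simp add: field_simps abs_le_iff)

lemma upper_bound_relative_deviation:
  fixes y y0 yp e :: real
  assumes "0 < y0" "\<bar>yp - y0\<bar> / y0 \<le> e" "y \<le> yp"
  shows "y \<le> (1 + e) * y0"
  using assms by (simp add: field_simps abs_le_iff)

lemma loewner_bounds_Sigma:
  assumes lam_pos: "\<forall>k. k \<noteq> i0 \<longrightarrow> 0 < lam k"
    and delay_small: "\<forall>k. k \<noteq> i0 \<longrightarrow> lam k * tp < pi / 2"
    and times: "0 \<le> tm" "tm \<le> tau" "tau \<le> tp" "0 \<le> tau0" "tau0 \<le> tp"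
    and epsm: "\<forall>k. k \<noteq> i0 \<longrightarrow>
      \<bar>f_delay (lam k) tm - f_delay (lam k) tau0\<bar> / f_delay (lam k) tau0 \<le> epsm"
    and epsp: "\<forall>k. k \<noteq> i0 \<longrightarrow>
      \<bar>f_delay (lam k) tp - f_delay (lam k) tau0\<bar> / f_delay (lam k) tau0 \<le> epsp"
  shows "loewner_le ((1 - epsm) *\<^sub>R Sigma b Q lam i0 tau0) (Sigma b Q lam i0 tau)
    \<and> loewner_le (Sigma b Q lam i0 tau) ((1 + epsp) *\<^sub>R Sigma b Q lam i0 tau0)"
proof
  have bounds: "(1 - epsm) * f_delay (lam k) tau0 \<le> f_delay (lam k) tau
      \<and> f_delay (lam k) tau \<le> (1 + epsp) * f_delay (lam k) tau0"
    if "k \<noteq> i0" for k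
  proof -
    have lk: "0 < lam k"
      using lam_pos that by blast
    have "lam k * t < pi / 2" if "t \<le> tp" for t
    proof -
      have "lam k * t \<le> lam k * tp"
        using lk that by simp
      then show ?thesis
        using delay_small \<open>k \<noteq> i0\<close> by fastforce
    qed
    then have "f_delay (lam k) tm \<le> f_delay (lam k) tau" "f_delay (lam k) tau \<le> f_delay (lam k) tp"
      and "0 < f_delay (lam k) tau0"
      using lk times by (auto intro!: f_delay_mono f_delay_pos)
    then show ?thesis
      using epsm epsp that
      by (blast intro: lower_bound_relative_deviation upper_bound_relative_deviation)
  qed
  then show "loewner_le ((1 - epsm) *\<^sub>R Sigma b Q lam i0 tau0) (Sigma b Q lam i0 tau)"
    by (intro loewner_le_scaleR_Sigma[where c' = 1, simplified]) blast
  from bounds show "loewner_le (Sigma b Q lam i0 tau) ((1 + epsp) *\<^sub>R Sigma b Q lam i0 tau0)"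
    by (intro loewner_le_scaleR_Sigma[where c = 1, simplified]) blast
qed

theorem proposition2:
  fixes w :: "'n::finite \<Rightarrow> 'n \<Rightarrow> real"
    and Q :: "real^'n^'n" and lam :: "'n \<Rightarrow> real" and i0 :: 'n
    and b tau0 alpha :: real
  assumes n2: "CARD('n) \<ge> 2"
    and graph: "weighted_simple_graph w" and conn: "graph_connected w"
    and orth: "orthogonal_matrix Q"
    and eig: "laplacian w = Q ** diag_mat lam ** transpose Q"
    and q1: "\<forall>j. Q $ j $ i0 = 1 / sqrt (real CARD('n))"
    and lam0: "lam i0 = 0"
    and lampos: "\<forall>k. k \<noteq> i0 \<longrightarrow> 0 < lam k"
    and b: "b \<noteq> 0"
    and tau0: "0 < tau0"
    and alpha: "0 \<le> alpha" "alpha < 1"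
    and small: "(1 + alpha) * tau0 < pi / (2 * Max (range lam))"
  shows "\<forall>tau. (1 - alpha) * tau0 \<le> tau \<and> tau \<le> (1 + alpha) * tau0 \<longrightarrow>
    (let epsp = Max ((\<lambda>k. \<bar>f_delay (lam k) ((1 + alpha) * tau0) - f_delay (lam k) tau0\<bar>
                          / f_delay (lam k) tau0) ` (UNIV - {i0}));
         epsm = Max ((\<lambda>k. \<bar>f_delay (lam k) ((1 - alpha) * tau0) - f_delay (lam k) tau0\<bar>
                          / f_delay (lam k) tau0) ` (UNIV - {i0}))
     in loewner_le ((1 - epsm) *\<^sub>R Sigma b Q lam i0 tau0) (Sigma b Q lam i0 tau)
      \<and> loewner_le (Sigma b Q lam i0 tau) ((1 + epsp) *\<^sub>R Sigma b Q lam i0 tau0))"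
proof -
  have delay_small: "lam k * ((1 + alpha) * tau0) < pi / 2" if "k \<noteq> i0" for k
  proof -
    have max: "lam k \<le> Max (range lam)"
      by simp
    have max_pos: "0 < Max (range lam)"
      using lampos that max by (meson less_le_trans)
    have "lam k * ((1 + alpha) * tau0) \<le> Max (range lam) * ((1 + alpha) * tau0)"
      using max tau0 alpha by (intro mult_right_mono) auto
    also have "\<dots> < pi / 2"
      using small max_pos by (simp add: field_simps)
    finally show ?thesis .
  qed
  show ?thesis
    unfolding Let_def using lampos delay_small tau0 alpha
    by (intro allI impI loewner_bounds_Sigma[where tm = "(1 - alpha) * tau0"
          and tp = "(1 + alpha) * tau0"]) auto
qed

end
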